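(* Let $q$ be a prime power and $L\in\mathbb{F}_q[x]$ a $q$-polynomial such that $L(x)/x$ is irreducible over $\mathbb{F}_q$. Then $L$ is not a $q^s$-polynomial for any integer $s>1$.
   Context: A $q$-polynomial is $\sum_{i=0}^n a_ix^{q^i}$; it is a $q^s$-polynomial if it has the form $\sum_{i=0}^m b_ix^{q^{is}}$, i.e. only exponents $q^j$ with $s\mid j$ occur. *)

theory Defs
  imports "HOL-Computational_Algebra.Polynomial" "HOL-Library.Cardinality"
begin

definition is_q_poly :: "nat \<Rightarrow> 'a::comm_ring_1 poly \<Rightarrow> bool" where
  "is_q_poly q L \<longleftrightarrow> (\<forall>n. coeff L n \<noteq> 0 \<longrightarrow> (\<exists>i. n = q ^ i))"

definition is_q_s_poly :: "nat \<Rightarrow> nat \<Rightarrow> 'a::comm_ring_1 poly \<Rightarrow> bool" where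
  "is_q_s_poly q s L \<longleftrightarrow> (\<forall>n. coeff L n \<noteq> 0 \<longrightarrow> (\<exists>j. n = q ^ j \<and> s dvd j))"

end

theory Submission
  imports Defs "HOL-Computational_Algebra.Polynomial_Factorial" "HOL-Library.FuncSet"
begin

text \<open>
  Let q be the size of the field and L = (SUM j<=m. b j * x^(q^(s*j))) with b m \<noteq> 0, so that
  f = L / x has degree q^(s*m) - 1. The q-th power map is additive on polynomials and fixes the
  constants, so raising L to the power q^(s*e) merely shifts its exponents. Using this, every
  x^(q^(s*i)) is congruent modulo f to a nonzero combination of x, x^(q^s), ..., x^(q^(s*(m-1))).
  There are fewer than q^m such combinations, so two of the first q^m of these powers agree
  modulo f, and extracting a q^(s*i)-th root yields f dvd x^(q^(s*k)) - x with 0 < k < q^m.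
  An irreducible divisor of x^(q^E) - x has degree at most E, because the q^(degree f)
  residues modulo f are all roots of Y^(q^E) - Y in the field of residues. Hence
  q^(s*m) - 1 \<le> s * (q^m - 1), which fails for s \<ge> 2.
\<close>

section \<open>The Frobenius map of a finite field\<close>

lemma power_card_eq_self:
  fixes c :: "'a::{finite,field}"
  shows "c ^ CARD('a) = c"
proof (cases "c = 0")
  case False
  let ?U = "UNIV - {0::'a}"
  have "bij_betw ((*) c) ?U ?U"
    using False by (intro bij_betw_byWitness[of _ "\<lambda>y. y / c"]) auto
  hence "\<Prod>?U = (\<Prod>y\<in>?U. c * y)"
    using prod.reindex_bij_betw[of "(*) c" ?U ?U "\<lambda>y. y"] by simp
  also have "\<dots> = c ^ card ?U * \<Prod>?U"
    by (simp add: prod.distrib)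
  finally have "c ^ card ?U = 1"
    by simp
  moreover have "CARD('a) = Suc (card ?U)"
    by (simp add: card_Diff_singleton Suc_diff_1)
  ultimately show ?thesis
    by (metis power_Suc mult.right_neutral)
qed simp

lemma power_card_power_eq_self:
  fixes c :: "'a::{finite,field}"
  shows "c ^ (CARD('a) ^ e) = c"
  by (induction e) (simp_all add: power_card_eq_self power_mult)

text \<open>
  The binomial coefficients of CARD('a) vanish in 'a because (1 + X)^q - X^q - 1 has degree
  below q and vanishes on all q field elements. This gives additivity of the q-th power
  without first showing that q is a power of the characteristic.
\<close>

lemma of_nat_card_choose_eq_0:
  assumes "0 < k" "k < CARD('a::{finite,field})"
  shows "of_nat (CARD('a) choose k) = (0::'a)"
proof -
  let ?q = "CARD('a)"
  define P :: "'a poly" where "P = [:1, 1:] ^ ?q - monom 1 ?q - 1"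
  have "poly P c = 0" for c
    using power_card_eq_self[of "1 + c"] power_card_eq_self[of c]
    by (simp add: P_def poly_monom)
  moreover have "degree P < ?q"
  proof (intro degree_lessI allI impI)
    fix i assume "?q \<le> i"
    then show "coeff P i = 0"
      by (cases "i = ?q") (auto simp: P_def coeff_linear_poly_power coeff_eq_0 degree_linear_power)
  qed simp
  ultimately have "P = 0"
    using card_poly_roots_bound[of P] by fastforce
  hence "coeff P k = 0"
    by simp
  thus ?thesis
    using assms by (simp add: P_def coeff_linear_poly_power)
qed

lemma add_power_eq_if_binomials_vanish:
  fixes x y :: "'b::comm_semiring_1"
  assumes "0 < n" and "\<And>k. 0 < k \<Longrightarrow> k < n \<Longrightarrow> of_nat (n choose k) = (0::'b)"
  shows "(x + y) ^ n = x ^ n + y ^ n"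
proof -
  have "(x + y) ^ n = (\<Sum>k\<le>n. of_nat (n choose k) * x ^ k * y ^ (n - k))"
    by (rule binomial_ring)
  also have "\<dots> = (\<Sum>k\<in>{0, n}. of_nat (n choose k) * x ^ k * y ^ (n - k))"
    using assms(2) by (intro sum.mono_neutral_right) auto
  finally show ?thesis
    using assms(1) by (simp add: add.commute)
qed

lemma poly_add_power_card:
  fixes u v :: "'a::{finite,field} poly"
  shows "(u + v) ^ CARD('a) = u ^ CARD('a) + v ^ CARD('a)"
  by (rule add_power_eq_if_binomials_vanish) (simp_all add: of_nat_poly of_nat_card_choose_eq_0)

lemma poly_add_power_card_power:
  fixes u v :: "'a::{finite,field} poly"
  shows "(u + v) ^ (CARD('a) ^ e) = u ^ (CARD('a) ^ e) + v ^ (CARD('a) ^ e)"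
  by (induction e arbitrary: u v) (simp_all add: poly_add_power_card power_mult)

lemma poly_diff_power_card_power:
  fixes u v :: "'a::{finite,field} poly"
  shows "(u - v) ^ (CARD('a) ^ e) = u ^ (CARD('a) ^ e) - v ^ (CARD('a) ^ e)"
  using poly_add_power_card_power[of "u - v" v e] by (simp add: eq_diff_eq)

lemma poly_sum_power_card_power:
  fixes g :: "'b \<Rightarrow> 'a::{finite,field} poly"
  shows "(\<Sum>i\<in>A. g i) ^ (CARD('a) ^ e) = (\<Sum>i\<in>A. g i ^ (CARD('a) ^ e))"
  by (induction A rule: infinite_finite_induct) (simp_all add: poly_add_power_card_power)

lemma monom_power_card_power:
  fixes c :: "'a::{finite,field}"
  shows "monom c n ^ (CARD('a) ^ e) = monom c (n * CARD('a) ^ e)"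
  by (simp add: monom_power power_card_power_eq_self)

lemma X_power_card_power_minus_X_dvd:
  fixes r :: "'a::{finite,field} poly"
  shows "monom 1 (CARD('a) ^ e) - monom 1 1 dvd r ^ (CARD('a) ^ e) - r"
proof (induction r rule: pCons_induct)
  case (pCons a p)
  let ?Q = "CARD('a) ^ e"
  have split: "pCons a p = [:a:] + monom 1 1 * p"
    by (simp add: monom_Suc monom_0)
  have "pCons a p ^ ?Q - pCons a p = [:a:] ^ ?Q + monom 1 ?Q * p ^ ?Q - ([:a:] + monom 1 1 * p)"
    unfolding split
    by (simp add: poly_add_power_card_power power_mult_distrib monom_power_card_power)
  also have "[:a:] ^ ?Q = [:a:]"
    using monom_power_card_power[of a 0 e] by (simp add: monom_0)
  also have "[:a:] + monom 1 ?Q * p ^ ?Q - ([:a:] + monom 1 1 * p)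
      = (monom 1 ?Q - monom 1 1) * p ^ ?Q + monom 1 1 * (p ^ ?Q - p)"
    by (simp add: algebra_simps)
  finally show ?case
    using pCons.IH by (simp add: dvd_add)
qed (simp add: zero_power)

section \<open>Counting roots modulo a prime\<close>

lemma lead_coeff_synthetic_div:
  fixes g :: "'a::comm_ring_1 poly"
  assumes "degree g \<noteq> 0"
  shows "lead_coeff (synthetic_div g c) = lead_coeff g"
proof -
  let ?h = "synthetic_div g c"
  have "degree g = Suc (degree ?h)"
    using assms by (simp add: degree_synthetic_div)
  hence "lead_coeff g = coeff ([:-c, 1:] * ?h + [:poly g c:]) (Suc (degree ?h))"
    by (simp only: synthetic_div_correct')
  also have "\<dots> = lead_coeff ?h"
    by (simp add: coeff_eq_0)
  finally show ?thesis
    by (rule sym)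
qed

lemma prime_elem_dvd_poly_synthetic_div:
  fixes p :: "'a::comm_ring_1"
  assumes "prime_elem p" and "p dvd poly g r" and "p dvd poly g r0" and "\<not> p dvd r - r0"
  shows "p dvd poly (synthetic_div g r0) r"
proof -
  have "(r - r0) * poly (synthetic_div g r0) r = poly g r - poly g r0"
    using arg_cong[OF synthetic_div_correct'[of r0 g], of "\<lambda>q. poly q r"]
    by (simp add: algebra_simps)
  hence "p dvd (r - r0) * poly (synthetic_div g r0) r"
    using assms(2,3) by (simp add: dvd_diff)
  thus ?thesis
    using assms(1,4) prime_elem_dvd_mult_iff by blast
qed

text \<open>
  The set R plays the role of a set of distinct roots of g in the quotient by p, given by
  pairwise incongruent representatives; no quotient type is needed.
\<close>

lemma card_roots_mod_prime_le_degree: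
  fixes p :: "'a::comm_ring_1" and g :: "'a poly"
  assumes "prime_elem p"
    and "\<not> p dvd lead_coeff g"
    and "\<And>r. r \<in> R \<Longrightarrow> p dvd poly g r"
    and "\<And>r r'. r \<in> R \<Longrightarrow> r' \<in> R \<Longrightarrow> p dvd r - r' \<Longrightarrow> r = r'"
  shows "card R \<le> degree g"
  using assms(2-)
proof (induction "degree g" arbitrary: g R)
  case 0
  from \<open>0 = degree g\<close> obtain a where "g = [:a:]"
    by (metis degree_eq_zeroE)
  hence "R = {}"
    using "0.prems" by auto
  thus ?case
    by simp
next
  case (Suc n)
  show ?case
  proof (cases "R = {}")
    case False
    then obtain r0 where r0: "r0 \<in> R"
      by blast
    define h where "h = synthetic_div g r0"
    have roots_h: "p dvd poly h r" if "r \<in> R - {r0}" for r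
      using that r0 Suc.prems(2,3) unfolding h_def
      by (intro prime_elem_dvd_poly_synthetic_div[OF assms(1)]) blast+
    have "degree h = n"
      using Suc.hyps(2) by (simp add: h_def degree_synthetic_div)
    moreover have "lead_coeff h = lead_coeff g"
      unfolding h_def using Suc.hyps(2) by (intro lead_coeff_synthetic_div) simp
    ultimately have "card (R - {r0}) \<le> n"
      using Suc.hyps(1)[of h "R - {r0}"] Suc.prems roots_h by auto
    moreover have "card R \<le> Suc (card (R - {r0}))"
      using r0 by (cases "finite R") (simp_all add: card_Suc_Diff1)
    ultimately show ?thesis
      using Suc.hyps(2) by simp
  qed simp
qed

section \<open>Polynomials with prescribed support\<close>

definition polys_supported_on :: "nat set \<Rightarrow> 'a::zero poly set" where
  "polys_supported_on N = {p. \<forall>n. coeff p n \<noteq> 0 \<longrightarrow> n \<in> N}"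

lemma monom_in_polys_supported_on: "n \<in> N \<Longrightarrow> monom c n \<in> polys_supported_on N"
  by (simp add: polys_supported_on_def)

lemma smult_in_polys_supported_on:
  assumes "p \<in> polys_supported_on N"
  shows "smult c p \<in> polys_supported_on N"
proof (unfold polys_supported_on_def, intro CollectI allI impI)
  fix n assume "coeff (smult c p) n \<noteq> 0"
  hence "coeff p n \<noteq> 0"
    by auto
  thus "n \<in> N"
    using assms unfolding polys_supported_on_def by blast
qed

lemma sum_smult_in_polys_supported_on:
  fixes w :: "'b \<Rightarrow> 'a::comm_semiring_1 poly"
  assumes "\<And>j. j \<in> A \<Longrightarrow> w j \<in> polys_supported_on N"
  shows "(\<Sum>j\<in>A. smult (a j) (w j)) \<in> polys_supported_on N"
proof -
  have "n \<in> N" if "coeff (\<Sum>j\<in>A. smult (a j) (w j)) n \<noteq> 0" for n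
  proof -
    have "(\<Sum>j\<in>A. a j * coeff (w j) n) \<noteq> 0"
      using that by (simp add: coeff_sum)
    then obtain j where "j \<in> A" "coeff (w j) n \<noteq> 0"
      by (force intro: sum.neutral)
    thus ?thesis
      using assms unfolding polys_supported_on_def by blast
  qed
  thus ?thesis
    by (simp add: polys_supported_on_def)
qed

lemma poly_eq_sum_monoms_if_supported:
  assumes "p \<in> polys_supported_on N" and "finite N"
  shows "p = (\<Sum>n\<in>N. monom (coeff p n) n)"
  using assms by (intro poly_eqI) (auto simp: polys_supported_on_def coeff_sum coeff_monom)

lemma degree_less_if_supported_below:
  assumes "p \<in> polys_supported_on {..<d}" and "0 < d"
  shows "degree p < d"
proof (rule degree_lessI)
  show "\<forall>k\<ge>d. coeff p k = 0"
    using assms(1) by (simp add: polys_supported_on_def) (meson leD)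
qed (use assms(2) in simp)

lemma bij_betw_coeff_polys_supported_on:
  assumes "finite N"
  shows "bij_betw (\<lambda>p. restrict (coeff p) N)
    (polys_supported_on N :: 'a::comm_monoid_add poly set) (PiE N (\<lambda>_. UNIV))"
proof (rule bij_betw_byWitness[where f' = "\<lambda>c. \<Sum>n\<in>N. monom (c n) n"])
  have "(\<Sum>n\<in>N. monom (restrict (coeff p) N n) n) = p" if "p \<in> polys_supported_on N" for p
    using poly_eq_sum_monoms_if_supported[OF that assms, symmetric] by simp
  thus "\<forall>p\<in>polys_supported_on N. (\<Sum>n\<in>N. monom (restrict (coeff p) N n) n) = p"
    by blast
  show "\<forall>c\<in>PiE N (\<lambda>_. UNIV). restrict (coeff (\<Sum>n\<in>N. monom (c n) n)) N = c"
    using assms by (auto simp: coeff_sum PiE_def extensional_def)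
  show "(\<lambda>p. restrict (coeff p) N) ` polys_supported_on N \<subseteq> PiE N (\<lambda>_. UNIV)"
    by (intro image_subsetI) (simp add: Pi_def)
  show "(\<lambda>c. \<Sum>n\<in>N. monom (c n) n) ` PiE N (\<lambda>_. UNIV) \<subseteq> polys_supported_on N"
    using assms by (auto simp: polys_supported_on_def coeff_sum)
qed

lemma card_polys_supported_on:
  assumes "finite N"
  shows "finite (polys_supported_on N :: 'a::{finite,comm_monoid_add} poly set)"
    and "card (polys_supported_on N :: 'a poly set) = CARD('a) ^ card N"
  using bij_betw_finite[OF bij_betw_coeff_polys_supported_on[OF assms, where 'a = 'a]]
    bij_betw_same_card[OF bij_betw_coeff_polys_supported_on[OF assms, where 'a = 'a]] assms
  by (simp_all add: finite_PiE card_PiE)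

section \<open>Irreducible divisors of x^(q^E) - x\<close>

lemma degree_pos_if_irreducible:
  fixes f :: "'a::field poly"
  shows "irreducible f \<Longrightarrow> 0 < degree f"
  by (auto simp: irreducible_def is_unit_iff_degree)

lemma two_le_card_field: "2 \<le> CARD('a::{finite,field})"
  using card_mono[of UNIV "{0, 1 :: 'a}"] by simp

lemma two_le_card_field_power:
  assumes "0 < n"
  shows "2 \<le> CARD('a::{finite,field}) ^ n"
  using two_le_card_field[where 'a = 'a] power_increasing[of 1 n "CARD('a)"] assms by simp

lemma degree_X_power_minus_X:
  assumes "1 < n"
  shows "degree (monom (1::'a::comm_ring_1) n - monom 1 1) = n"
proof (rule antisym)
  show "degree (monom (1::'a) n - monom 1 1) \<le> n"
    by (rule degree_diff_le[OF degree_monom_le order.trans[OF degree_monom_le]])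
      (use assms in linarith)
  show "n \<le> degree (monom (1::'a) n - monom 1 1)"
    using assms by (intro le_degree) simp
qed

lemma lead_coeff_X_power_minus_X:
  assumes "1 < n"
  shows "lead_coeff (monom (1::'a::comm_ring_1) n - monom 1 1) = 1"
  unfolding degree_X_power_minus_X[OF assms] using assms by simp

lemma degree_le_if_dvd_X_power_card_power_minus_X:
  fixes f :: "'a::{finite,field} poly"
  assumes irr: "irreducible f"
    and dvd: "f dvd monom 1 (CARD('a) ^ E) - monom 1 1"
    and "0 < E"
  shows "degree f \<le> E"
proof -
  let ?q = "CARD('a)"
  let ?Q = "?q ^ E"
  define g :: "'a poly poly" where "g = monom 1 ?Q - monom 1 1"
  have "1 < ?Q"
    using two_le_card_field_power[OF \<open>0 < E\<close>, where 'a = 'a] by simp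
  hence deg_g: "degree g = ?Q" and lead_g: "lead_coeff g = 1"
    unfolding g_def by (rule degree_X_power_minus_X, rule lead_coeff_X_power_minus_X)
  have prime: "prime_elem f"
    using irr by (rule field_poly_irreducible_imp_prime)
  have "0 < degree f"
    using irr by (rule degree_pos_if_irreducible)
  \<comment> \<open>the residues modulo f, all roots of g by the Frobenius congruence\<close>
  let ?R = "polys_supported_on {..<degree f} :: 'a poly set"
  have "card ?R \<le> degree g"
  proof (rule card_roots_mod_prime_le_degree[OF prime])
    show "\<not> f dvd lead_coeff g"
      using irr by (simp add: lead_g irreducible_def)
    show "f dvd poly g r" for r
      using dvd_trans[OF dvd X_power_card_power_minus_X_dvd[of E r]] by (simp add: g_def poly_monom)
    show "r = r'" if "r \<in> ?R" "r' \<in> ?R" "f dvd r - r'" for r r'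
    proof (rule ccontr)
      assume "r \<noteq> r'"
      moreover have "degree (r - r') < degree f"
        using that(1,2) \<open>0 < degree f\<close>
        by (intro degree_diff_less degree_less_if_supported_below)
      ultimately show False
        using dvd_imp_degree_le[OF that(3)] by simp
    qed
  qed
  hence "?q ^ degree f \<le> ?q ^ E"
    by (simp add: card_polys_supported_on deg_g)
  thus ?thesis
    using two_le_card_field[where 'a = 'a] by (simp add: power_le_imp_le_exp)
qed

section \<open>Irreducible factors of q^s-polynomials\<close>

lemma q_s_poly_eq_X_mult_div_X:
  fixes L :: "'a::field poly"
  assumes "is_q_s_poly q s L" and "0 < q"
  shows "L = [:0, 1:] * (L div [:0, 1:])"
proof -
  have "coeff L 0 = 0"
    using assms by (auto simp: is_q_s_poly_def)
  hence "[:0, 1:] dvd L"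
    by (simp add: dvd_iff_poly_eq_0 poly_0_coeff_0)
  thus ?thesis
    by (rule dvd_mult_div_cancel[symmetric])
qed

lemma degree_q_s_poly:
  assumes "is_q_s_poly q s L" and "L \<noteq> 0"
  obtains m where "degree L = q ^ (s * m)"
proof -
  obtain j where "degree L = q ^ j" "s dvd j"
    using assms unfolding is_q_s_poly_def by (meson leading_coeff_0_iff)
  thus ?thesis
    using that by (auto elim!: dvdE)
qed

lemma degree_q_s_poly_div_X:
  fixes L :: "'a::field poly"
  assumes "is_q_s_poly q s L" and "0 < q" and "0 < degree (L div [:0, 1:])"
  obtains m where "0 < m" and "degree L = q ^ (s * m)"
    and "degree (L div [:0, 1:]) = q ^ (s * m) - 1"
proof -
  let ?f = "L div [:0, 1:]"
  have L: "L = [:0, 1:] * ?f"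
    using assms(1,2) by (rule q_s_poly_eq_X_mult_div_X)
  have "?f \<noteq> 0"
    using assms(3) by auto
  hence deg_L: "degree L = Suc (degree ?f)"
    using arg_cong[OF L, of degree] by simp
  hence "L \<noteq> 0"
    by auto
  then obtain m where m: "degree L = q ^ (s * m)"
    by (elim degree_q_s_poly[OF assms(1)])
  moreover have "0 < m"
    using deg_L m assms(3) by (cases m) auto
  ultimately show ?thesis
    using that deg_L by simp
qed

lemma q_s_poly_eq_sum_monoms:
  fixes L :: "'a::comm_ring_1 poly"
  assumes "is_q_s_poly q s L" "1 < q" "0 < s" "degree L \<le> q ^ (s * m)"
  shows "L = (\<Sum>j\<le>m. monom (coeff L (q ^ (s * j))) (q ^ (s * j)))"
proof -
  have supported: "L \<in> polys_supported_on ((\<lambda>j. q ^ (s * j)) ` {..m})"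
  proof (unfold polys_supported_on_def, intro CollectI allI impI)
    fix n assume "coeff L n \<noteq> 0"
    then obtain j where "n = q ^ j" "s dvd j"
      using assms(1) unfolding is_q_s_poly_def by blast
    then obtain k where n: "n = q ^ (s * k)"
      by (auto elim!: dvdE)
    have "q ^ (s * k) \<le> q ^ (s * m)"
      using le_degree[OF \<open>coeff L n \<noteq> 0\<close>] assms(4) n by simp
    hence "k \<le> m"
      using assms(2,3) by simp
    thus "n \<in> (\<lambda>j. q ^ (s * j)) ` {..m}"
      using n by simp
  qed
  have "L = (\<Sum>n\<in>(\<lambda>j. q ^ (s * j)) ` {..m}. monom (coeff L n) n)"
    using supported by (rule poly_eq_sum_monoms_if_supported) simp
  also have "\<dots> = (\<Sum>j\<le>m. monom (coeff L (q ^ (s * j))) (q ^ (s * j)))"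
    using assms(2,3) by (subst sum.reindex) (auto intro: inj_onI)
  finally show ?thesis .
qed

lemma power_card_power_of_q_s_sum:
  fixes b :: "nat \<Rightarrow> 'a::{finite,field}"
  shows "(\<Sum>j\<in>A. monom (b j) (CARD('a) ^ (s * j))) ^ (CARD('a) ^ (s * e))
    = (\<Sum>j\<in>A. monom (b j) (CARD('a) ^ (s * (j + e))))"
  by (simp add: poly_sum_power_card_power monom_power_card_power distrib_left power_add)

lemma dvd_monom_minus_smult_sum:
  fixes f :: "'a::field poly" and b :: "nat \<Rightarrow> 'a" and n :: "nat \<Rightarrow> nat"
  assumes "f dvd (\<Sum>j\<le>m. monom (b j) (n j))" and "b m \<noteq> 0"
    and "\<And>j. j < m \<Longrightarrow> f dvd monom 1 (n j) - w j"
  shows "f dvd monom 1 (n m) - smult (- inverse (b m)) (\<Sum>j<m. smult (b j) (w j))"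
proof -
  have "f dvd (\<Sum>j\<le>m. monom (b j) (n j)) - (\<Sum>j<m. smult (b j) (monom 1 (n j) - w j))"
    using assms(3) by (intro dvd_diff[OF assms(1)] dvd_sum dvd_smult) auto
  also have "(\<Sum>j\<le>m. monom (b j) (n j)) = (\<Sum>j<m. monom (b j) (n j)) + monom (b m) (n m)"
    unfolding lessThan_Suc_atMost[symmetric] by simp
  also have "\<dots> - (\<Sum>j<m. smult (b j) (monom 1 (n j) - w j))
      = monom (b m) (n m) + (\<Sum>j<m. smult (b j) (w j))"
    by (simp add: smult_diff_right sum_subtractf smult_monom)
  also have "\<dots>
      = smult (b m) (monom 1 (n m) - smult (- inverse (b m)) (\<Sum>j<m. smult (b j) (w j)))"
    using assms(2) by (simp add: smult_add_right smult_monom)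
  finally show ?thesis
    using assms(2) by (rule dvd_smult_cancel)
qed

text \<open>
  For i \<ge> m, the power L^(q^(s*(i-m))) is a multiple of f with top monomial
  b m * x^(q^(s*i)), and its lower monomials are reduced by the induction hypothesis.
\<close>

lemma X_power_congruent_to_low_q_s_poly:
  fixes f :: "'a::{finite,field} poly" and b :: "nat \<Rightarrow> 'a"
  assumes "f dvd (\<Sum>j\<le>m. monom (b j) (CARD('a) ^ (s * j)))" and "b m \<noteq> 0"
  shows "\<exists>w \<in> polys_supported_on ((\<lambda>k. CARD('a) ^ (s * k)) ` {..<m}).
           f dvd monom 1 (CARD('a) ^ (s * i)) - w"
proof (induction i rule: less_induct)
  case (less i)
  let ?q = "CARD('a)"
  let ?W = "polys_supported_on ((\<lambda>k. ?q ^ (s * k)) ` {..<m}) :: 'a poly set"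
  show ?case
  proof (cases "i < m")
    case True
    thus ?thesis
      by (intro bexI[of _ "monom 1 (?q ^ (s * i))"] monom_in_polys_supported_on) auto
  next
    case False
    define e where "e = i - m"
    have "\<forall>j\<in>{..<m}. \<exists>w\<in>?W. f dvd monom 1 (?q ^ (s * (j + e))) - w"
      using False by (auto simp: e_def intro!: less.IH)
    then obtain w
      where w: "\<forall>j\<in>{..<m}. w j \<in> ?W \<and> f dvd monom 1 (?q ^ (s * (j + e))) - w j"
      by metis
    have "f dvd (\<Sum>j\<le>m. monom (b j) (?q ^ (s * j))) ^ (?q ^ (s * e))"
      using assms(1) by (rule dvd_trans) simp
    hence "f dvd (\<Sum>j\<le>m. monom (b j) (?q ^ (s * (j + e))))"
      by (simp only: power_card_power_of_q_s_sum)
    hence "f dvd monom 1 (?q ^ (s * (m + e)))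
        - smult (- inverse (b m)) (\<Sum>j<m. smult (b j) (w j))"
      using assms(2) w by (intro dvd_monom_minus_smult_sum) auto
    moreover have "smult (- inverse (b m)) (\<Sum>j<m. smult (b j) (w j)) \<in> ?W"
      using w by (intro smult_in_polys_supported_on sum_smult_in_polys_supported_on) blast
    ultimately show ?thesis
      using False by (intro bexI) (simp_all add: e_def)
  qed
qed

lemma collision_in_polys_supported_on:
  fixes w :: "nat \<Rightarrow> 'a::{finite,comm_monoid_add} poly"
  assumes "finite N" and "card N \<le> m" and "\<And>i. w i \<in> polys_supported_on N - {0}"
  obtains i j where "i < j" and "j < CARD('a) ^ m" and "w i = w j"
proof -
  have "card (w ` {..<CARD('a) ^ m}) \<le> card (polys_supported_on N - {0} :: 'a poly set)"
    using assms(1,3) card_polys_supported_on(1) by (intro card_mono) auto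
  also have "\<dots> = card (polys_supported_on N :: 'a poly set) - 1"
    by (rule card_Diff_singleton) (simp add: polys_supported_on_def)
  also have "\<dots> = CARD('a) ^ card N - 1"
    using assms(1) by (simp add: card_polys_supported_on)
  also have "\<dots> < CARD('a) ^ m"
  proof -
    have "CARD('a) ^ card N \<le> CARD('a) ^ m"
      using assms(2) by (intro power_increasing) auto
    moreover have "0 < CARD('a) ^ card N"
      by simp
    ultimately show ?thesis
      by linarith
  qed
  finally have "\<not> inj_on w {..<CARD('a) ^ m}"
    by (intro pigeonhole) simp
  thus ?thesis
    using that unfolding inj_on_def by (metis lessThan_iff nat_neq_iff)
qed

lemma prime_factor_of_q_s_poly_dvd_X_power_minus_X:
  fixes f :: "'a::{finite,field} poly" and b :: "nat \<Rightarrow> 'a"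
  assumes "prime_elem f" and "\<not> f dvd monom 1 1"
    and "f dvd (\<Sum>j\<le>m. monom (b j) (CARD('a) ^ (s * j)))" and "b m \<noteq> 0"
  shows "\<exists>k. 0 < k \<and> k < CARD('a) ^ m \<and> f dvd monom 1 (CARD('a) ^ (s * k)) - monom 1 1"
proof -
  let ?q = "CARD('a)"
  let ?N = "(\<lambda>k. ?q ^ (s * k)) ` {..<m}"
  let ?X = "\<lambda>i. monom (1::'a) (?q ^ (s * i))"
  obtain w where w: "\<And>i. w i \<in> polys_supported_on ?N" "\<And>i. f dvd ?X i - w i"
    using X_power_congruent_to_low_q_s_poly[OF assms(3,4)] by metis
  have w_nonzero: "w i \<noteq> 0" for i
  proof
    assume "w i = 0"
    hence "f dvd monom 1 1 ^ (?q ^ (s * i))"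
      using w(2)[of i] by (simp add: monom_power)
    thus False
      using assms(1,2) prime_elem_dvd_power by blast
  qed
  have "card ?N \<le> m"
    using card_image_le[of "{..<m}" "\<lambda>k. ?q ^ (s * k)"] by simp
  moreover have "w i \<in> polys_supported_on ?N - {0}" for i
    using w(1) w_nonzero by blast
  ultimately obtain i j where ij: "i < j" "j < ?q ^ m" "w i = w j"
    by (rule collision_in_polys_supported_on[OF finite_imageI[OF finite_lessThan]])
  \<comment> \<open>x^(q^(s*i)) - x^(q^(s*j)) is a q^(s*i)-th power, and f is prime\<close>
  have "f dvd (?X i - w i) - (?X j - w j)"
    by (rule dvd_diff[OF w(2) w(2)])
  also have "(?X i - w i) - (?X j - w j) = (monom 1 1 - ?X (j - i)) ^ (?q ^ (s * i))"
    using ij by (simp add: poly_diff_power_card_power monom_power_card_power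
        flip: power_add add_mult_distrib2)
  finally have "f dvd monom 1 1 - ?X (j - i)"
    using assms(1) prime_elem_dvd_power by blast
  hence "f dvd ?X (j - i) - monom 1 1"
    by (metis dvd_minus_iff minus_diff_eq)
  thus ?thesis
    using ij by (intro exI[of _ "j - i"]) auto
qed

lemma mult_pred_less_power_pred:
  fixes a s :: nat
  assumes "2 \<le> a" and "2 \<le> s"
  shows "s * (a - 1) < a ^ s - 1"
  using assms(2)
proof (induction s rule: nat_induct_at_least)
  case base
  obtain b where "a = b + 2"
    using assms(1) le_Suc_ex by (metis add.commute)
  thus ?case
    by (simp add: power2_eq_square algebra_simps)
next
  case (Suc s)
  have "1 \<le> a ^ s"
    using assms(1) by simp
  hence "a ^ Suc s - 1 = (a - 1) * a ^ s + (a ^ s - 1)"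
    using assms(1) by (simp add: diff_mult_distrib)
  moreover have "a - 1 \<le> (a - 1) * a ^ s"
    using \<open>1 \<le> a ^ s\<close> by simp
  moreover have "Suc s * (a - 1) = (a - 1) + s * (a - 1)"
    by simp
  ultimately show ?case
    using Suc.IH \<open>1 \<le> a ^ s\<close> by linarith
qed

lemma degree_irreducible_factor_of_q_s_poly_le:
  fixes f L :: "'a::{finite,field} poly"
  assumes "irreducible f" and "\<not> f dvd monom 1 1" and "f dvd L"
    and "is_q_s_poly CARD('a) s L" and "0 < s" and "degree L = CARD('a) ^ (s * m)"
  shows "degree f \<le> s * (CARD('a) ^ m - 1)"
proof -
  let ?q = "CARD('a)"
  have "1 < ?q"
    using two_le_card_field[where 'a = 'a] by simp
  have "L \<noteq> 0"
    using assms(6) by auto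
  hence lead: "coeff L (?q ^ (s * m)) \<noteq> 0"
    using assms(6) by (metis leading_coeff_0_iff)
  have dvd_L: "f dvd (\<Sum>j\<le>m. monom (coeff L (?q ^ (s * j))) (?q ^ (s * j)))"
    using assms(3) q_s_poly_eq_sum_monoms[OF assms(4) \<open>1 < ?q\<close> assms(5)] assms(6)
    by simp
  obtain k where k: "0 < k" "k < ?q ^ m" "f dvd monom 1 (?q ^ (s * k)) - monom 1 1"
    using prime_factor_of_q_s_poly_dvd_X_power_minus_X
        [OF field_poly_irreducible_imp_prime[OF assms(1)] assms(2) dvd_L lead]
    by blast
  have "degree f \<le> s * k"
    using k assms(1,5) by (intro degree_le_if_dvd_X_power_card_power_minus_X) auto
  also have "\<dots> \<le> s * (?q ^ m - 1)"
    using k(2) by (intro mult_le_mono2) linarith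
  finally show ?thesis .
qed

theorem theorem7p7:
  fixes L :: "'a::{finite,field} poly" and s :: nat
  assumes "is_q_poly CARD('a) L"
    and "irreducible (L div [:0, 1:])"
    and "s > 1"
  shows "\<not> is_q_s_poly CARD('a) s L"
proof
  assume q_s: "is_q_s_poly CARD('a) s L"
  let ?q = "CARD('a)"
  define f where "f = L div [:0, 1:]"
  have irr: "irreducible f"
    using assms(2) by (simp add: f_def)
  obtain m where "0 < m" and m: "degree L = ?q ^ (s * m)" and deg_f: "degree f = ?q ^ (s * m) - 1"
    using degree_q_s_poly_div_X[OF q_s] degree_pos_if_irreducible[OF irr] by (auto simp: f_def)
  have less: "s * (?q ^ m - 1) < degree f"
    using mult_pred_less_power_pred[OF two_le_card_field_power[OF \<open>0 < m\<close>, where 'a = 'a]]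
      assms(3)
    by (simp add: deg_f power_mult mult.commute)
  moreover have "1 \<le> s * (?q ^ m - 1)"
    using two_le_card_field_power[OF \<open>0 < m\<close>, where 'a = 'a] assms(3) by simp
  ultimately have "1 < degree f"
    by linarith
  hence "\<not> f dvd monom 1 1"
    using dvd_imp_degree_le[of f "monom 1 1"] by (auto simp: degree_monom_eq)
  moreover have "f dvd L"
    using q_s_poly_eq_X_mult_div_X[OF q_s] by (metis f_def dvd_triv_right zero_less_card_finite)
  ultimately have "degree f \<le> s * (?q ^ m - 1)"
    using irr q_s assms(3) m by (intro degree_irreducible_factor_of_q_s_poly_le) auto
  with less show False
    by simp
qed

end
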